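(* Let $H=(V,E)$ be a hypergraph, and let $L$ be a graph satisfying one of the following: (a) $\deg_H(v)\le 2$ for all $v\in V$ and $L=\mathcal L(H)$; or (b) $L=\mathcal L_2^*(H)$ and $L$ is bipartite; or (c) $L=\mathcal L_3^*(H)$. Then $H$ is eulerian whenever $L$ has a Hamilton cycle, and $H$ is quasi-eulerian whenever $L$ has a $2$-factor. Moreover, in cases (b) and (c), $H$ is quasi-eulerian whenever $L$ has a spanning subgraph each of whose connected components is $1$-regular or $2$-regular.
   Context: A hypergraph $H=(V,E)$ consists of a finite nonempty vertex set $V$, a finite edge set $E$ disjoint from $V$, and an incidence function assigning to each edge $e\in E$ a subset of $V$ (also denoted $e$); distinct edges may have the same vertex set. Hypergraphs are assumed to have no empty edges. The degree $\deg_H(v)$ is the number of edges containing $v$. A walk is a sequence $W=v_0e_1v_1e_2\cdots e_kv_k$ with $v_i\in V$, $e_i\in E$, such that for each $i$, $v_{i-1}\ne v_i$ and $v_{i-1},v_i\in e_i$; the $v_i$ are its anchors. $W$ is closed if $k\ge 2$ and $v_0=v_k$; it is a strict trail if $e_1,\dots,e_k$ are pairwise distinct. An Euler tour of $H$ is a closed strict trail traversing every edge of $H$; an Euler family of $H$ is a family of closed strict trails such that every edge of $H$ lies in exactly one trail and no two trails have a common anchor. $H$ is eulerian (quasi-eulerian) if it has an Euler tour (Euler family). The intersection graph $\mathcal L(H)$ is the simple graph with vertex set $E$ in which distinct $e,e'$ are adjacent iff $e\cap e'\ne\emptyset$; for a positive integer $\ell$, $\mathcal L_\ell^*(H)$ is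 the simple graph with vertex set $E$ in which distinct $e,e'$ are adjacent iff $|e\cap e'|\ge \ell$. *)

theory Defs
  imports Main
begin

text \<open>A hypergraph is given by a vertex set V (of type 'v), an edge set E (of type 'e,
  hence disjoint from V) and an incidence function inc assigning to each edge its vertex set.\<close>

definition hypergraph :: "'v set \<Rightarrow> 'e set \<Rightarrow> ('e \<Rightarrow> 'v set) \<Rightarrow> bool" where
  "hypergraph V E inc \<longleftrightarrow> finite V \<and> V \<noteq> {} \<and> finite E \<and>
     (\<forall>e\<in>E. inc e \<subseteq> V \<and> inc e \<noteq> {})"

definition hdeg :: "'e set \<Rightarrow> ('e \<Rightarrow> 'v set) \<Rightarrow> 'v \<Rightarrow> nat" where
  "hdeg E inc v = card {e\<in>E. v \<in> inc e}"

text \<open>A walk v0 e1 v1 ... ek vk is represented by the anchor list vs = [v0,...,vk]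
  and the edge list es = [e1,...,ek].\<close>

definition is_walk :: "'v set \<Rightarrow> 'e set \<Rightarrow> ('e \<Rightarrow> 'v set) \<Rightarrow> 'v list \<Rightarrow> 'e list \<Rightarrow> bool" where
  "is_walk V E inc vs es \<longleftrightarrow> length vs = Suc (length es) \<and> set vs \<subseteq> V \<and> set es \<subseteq> E \<and>
     (\<forall>i < length es. vs ! i \<noteq> vs ! Suc i \<and> vs ! i \<in> inc (es ! i) \<and> vs ! Suc i \<in> inc (es ! i))"

definition closed_strict_trail :: "'v set \<Rightarrow> 'e set \<Rightarrow> ('e \<Rightarrow> 'v set) \<Rightarrow> 'v list \<Rightarrow> 'e list \<Rightarrow> bool" where
  "closed_strict_trail V E inc vs es \<longleftrightarrow> is_walk V E inc vs es \<and> length es \<ge> 2 \<and>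
     hd vs = last vs \<and> distinct es"

definition eulerian :: "'v set \<Rightarrow> 'e set \<Rightarrow> ('e \<Rightarrow> 'v set) \<Rightarrow> bool" where
  "eulerian V E inc \<longleftrightarrow> (\<exists>vs es. closed_strict_trail V E inc vs es \<and> set es = E)"

definition euler_family :: "'v set \<Rightarrow> 'e set \<Rightarrow> ('e \<Rightarrow> 'v set) \<Rightarrow> ('v list \<times> 'e list) set \<Rightarrow> bool" where
  "euler_family V E inc F \<longleftrightarrow> finite F \<and>
     (\<forall>(vs, es)\<in>F. closed_strict_trail V E inc vs es) \<and>
     (\<forall>e\<in>E. \<exists>!T\<in>F. e \<in> set (snd T)) \<and>
     (\<forall>T\<in>F. \<forall>T'\<in>F. T \<noteq> T' \<longrightarrow> set (fst T) \<inter> set (fst T') = {})"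

definition quasi_eulerian :: "'v set \<Rightarrow> 'e set \<Rightarrow> ('e \<Rightarrow> 'v set) \<Rightarrow> bool" where
  "quasi_eulerian V E inc \<longleftrightarrow> (\<exists>F. euler_family V E inc F)"

definition intersection_graph :: "('e \<Rightarrow> 'v set) \<Rightarrow> 'e \<Rightarrow> 'e \<Rightarrow> bool" where
  "intersection_graph inc e e' \<longleftrightarrow> e \<noteq> e' \<and> inc e \<inter> inc e' \<noteq> {}"

definition intersection_graph_star :: "nat \<Rightarrow> ('e \<Rightarrow> 'v set) \<Rightarrow> 'e \<Rightarrow> 'e \<Rightarrow> bool" where
  "intersection_graph_star l inc e e' \<longleftrightarrow> e \<noteq> e' \<and> card (inc e \<inter> inc e') \<ge> l"

text \<open>Simple graphs on a vertex set X with symmetric irreflexive adjacency adj.\<close>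

definition bipartite :: "'a set \<Rightarrow> ('a \<Rightarrow> 'a \<Rightarrow> bool) \<Rightarrow> bool" where
  "bipartite X adj \<longleftrightarrow> (\<exists>A\<subseteq>X. \<forall>x\<in>X. \<forall>y\<in>X. adj x y \<longrightarrow> (x \<in> A \<longleftrightarrow> y \<notin> A))"

definition hamilton_cycle :: "'a set \<Rightarrow> ('a \<Rightarrow> 'a \<Rightarrow> bool) \<Rightarrow> 'a list \<Rightarrow> bool" where
  "hamilton_cycle X adj cs \<longleftrightarrow> length cs \<ge> 3 \<and> distinct cs \<and> set cs = X \<and>
     (\<forall>i < length cs - 1. adj (cs ! i) (cs ! Suc i)) \<and> adj (last cs) (hd cs)"

definition has_hamilton_cycle :: "'a set \<Rightarrow> ('a \<Rightarrow> 'a \<Rightarrow> bool) \<Rightarrow> bool" where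
  "has_hamilton_cycle X adj \<longleftrightarrow> (\<exists>cs. hamilton_cycle X adj cs)"

text \<open>A spanning subgraph is given by its edge set S, a set of 2-element sets of vertices
  that are edges of the graph.\<close>

definition spanning_edges :: "'a set \<Rightarrow> ('a \<Rightarrow> 'a \<Rightarrow> bool) \<Rightarrow> 'a set set \<Rightarrow> bool" where
  "spanning_edges X adj S \<longleftrightarrow> (\<forall>s\<in>S. \<exists>x\<in>X. \<exists>y\<in>X. adj x y \<and> s = {x, y})"

definition sdeg :: "'a set set \<Rightarrow> 'a \<Rightarrow> nat" where
  "sdeg S x = card {y. {x, y} \<in> S}"

definition has_2_factor :: "'a set \<Rightarrow> ('a \<Rightarrow> 'a \<Rightarrow> bool) \<Rightarrow> bool" where
  "has_2_factor X adj \<longleftrightarrow> (\<exists>S. spanning_edges X adj S \<and> (\<forall>x\<in>X. sdeg S x = 2))"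

definition sreach :: "'a set set \<Rightarrow> 'a \<Rightarrow> 'a \<Rightarrow> bool" where
  "sreach S x y \<longleftrightarrow> (x, y) \<in> {(a, b). {a, b} \<in> S}\<^sup>*"

definition has_1_2_regular_spanning :: "'a set \<Rightarrow> ('a \<Rightarrow> 'a \<Rightarrow> bool) \<Rightarrow> bool" where
  "has_1_2_regular_spanning X adj \<longleftrightarrow> (\<exists>S. spanning_edges X adj S \<and>
     (\<forall>x\<in>X. (\<forall>y. sreach S x y \<longrightarrow> sdeg S y = 1) \<or> (\<forall>y. sreach S x y \<longrightarrow> sdeg S y = 2)))"

end

theory Submission
  imports Defs
begin

text \<open>Let e_0, ..., e_{k-1} be a cycle of L. Traversing its edges in this order is a closed strict
  trail as soon as one can choose anchors v_i \<in> e_i \<inter> e_{i+1} (indices mod k) with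
  v_i \<noteq> v_{i+1}, that is, a proper colouring of the cycle C_k from the lists e_i \<inter> e_{i+1}.
  Such a colouring exists greedily when all lists have at least 3 elements (case (c)), when they
  have at least 2 elements and k is even (case (b), as L is bipartite), and for k \<ge> 3 in case (a)
  with any choice, since a vertex lies in at most two edges. Hence a Hamilton cycle of L yields an
  Euler tour. A spanning subgraph whose components are 1- or 2-regular splits E into cycles of L,
  a 1-regular component being a cycle of length 2, and the corresponding closed strict trails
  partition E; two such trails sharing an anchor merge into one, so merging until the anchor sets
  are disjoint yields an Euler family.\<close>

section \<open>Walks and closed strict trails\<close>

lemma is_walk_take:
  assumes "is_walk V E inc vs es" "i \<le> length es"
  shows "is_walk V E inc (take (Suc i) vs) (take i es)"
  using assms unfolding is_walk_def
  by (auto simp: min_def dest: in_set_takeD)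

lemma is_walk_drop:
  assumes "is_walk V E inc vs es" "i \<le> length es"
  shows "is_walk V E inc (drop i vs) (drop i es)"
  using assms unfolding is_walk_def
  by (auto dest: in_set_dropD)

lemma nth_append_tl:
  assumes "length xs = Suc n" "last xs = hd ys" "ys \<noteq> []"
  shows "(xs @ tl ys) ! (n + j) = ys ! j"
proof (cases j)
  case 0
  with assms show ?thesis
    by (metis add.right_neutral diff_Suc_1 hd_conv_nth last_conv_nth lessI list.size(3)
        nat.simps(3) nth_append_left)
next
  case (Suc j')
  with assms show ?thesis
    by (cases ys) (auto simp: nth_append)
qed

lemma is_walk_append:
  assumes w1: "is_walk V E inc vs1 es1" and w2: "is_walk V E inc vs2 es2"
    and joint: "last vs1 = hd vs2"
  shows "is_walk V E inc (vs1 @ tl vs2) (es1 @ es2)"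
proof -
  let ?vs = "vs1 @ tl vs2" and ?es = "es1 @ es2"
  have len1: "length vs1 = Suc (length es1)" and len2: "length vs2 = Suc (length es2)"
    using w1 w2 by (auto simp: is_walk_def)
  then have "vs2 \<noteq> []" by auto
  note shift = nth_append_tl[OF len1 joint this]
  have "?vs ! i \<noteq> ?vs ! Suc i \<and> ?vs ! i \<in> inc (?es ! i) \<and> ?vs ! Suc i \<in> inc (?es ! i)"
    if i: "i < length ?es" for i
  proof (cases "i < length es1")
    case True
    then show ?thesis using w1 len1 by (simp add: nth_append is_walk_def)
  next
    case False
    then obtain j where j: "i = length es1 + j" "j < length es2"
      using i by (metis add_diff_inverse_nat length_append nat_add_left_cancel_less)
    then have "?vs ! i = vs2 ! j" "?vs ! Suc i = vs2 ! Suc j" "?es ! i = es2 ! j"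
      using shift[of j] shift[of "Suc j"] by (simp_all add: nth_append)
    then show ?thesis using w2 j by (simp add: is_walk_def)
  qed
  moreover have "set ?vs \<subseteq> V"
    using w1 w2 \<open>vs2 \<noteq> []\<close> by (auto simp: is_walk_def dest: list.set_sel(2))
  ultimately show ?thesis
    using w1 w2 len1 len2 unfolding is_walk_def by auto
qed

lemma closed_strict_trail_rotate:
  assumes T: "closed_strict_trail V E inc vs es" and i: "i \<le> length es"
  shows "closed_strict_trail V E inc (drop i vs @ tl (take (Suc i) vs)) (drop i es @ take i es)"
    and "hd (drop i vs @ tl (take (Suc i) vs)) = vs ! i"
    and "set (drop i es @ take i es) = set es"
proof -
  let ?vs = "drop i vs @ tl (take (Suc i) vs)"
  have w: "is_walk V E inc vs es" and l2: "length es \<ge> 2" and hl: "hd vs = last vs"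
    and d: "distinct es"
    using T by (auto simp: closed_strict_trail_def)
  have il: "i < length vs" using i w by (simp add: is_walk_def)
  have "last (drop i vs) = hd (take (Suc i) vs)"
    using il hl by (simp add: hd_conv_nth)
  then have W: "is_walk V E inc ?vs (drop i es @ take i es)"
    using is_walk_append[OF is_walk_drop[OF w i] is_walk_take[OF w i]] by simp
  show hd: "hd ?vs = vs ! i"
    using il by (simp add: hd_drop_conv_nth)
  have "last ?vs = vs ! i"
  proof (cases i)
    case 0
    then show ?thesis using hl il by (cases vs) auto
  next
    case (Suc j)
    then have "tl (take (Suc i) vs) \<noteq> []" using il by (cases vs) auto
    then show ?thesis using il by (simp add: last_tl take_Suc_conv_app_nth)
  qed
  moreover have "distinct (drop i es @ take i es)"
    using d by (metis append_take_drop_id distinct_append inf_commute)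
  ultimately show "closed_strict_trail V E inc ?vs (drop i es @ take i es)"
    using W hd l2 i unfolding closed_strict_trail_def by simp
  show "set (drop i es @ take i es) = set es"
    by (metis append_take_drop_id set_append sup_commute)
qed

lemma closed_strict_trail_rotate_to:
  assumes T: "closed_strict_trail V E inc vs es" and v: "v \<in> set vs"
  obtains vs' es' where "closed_strict_trail V E inc vs' es'" "hd vs' = v" "set es' = set es"
proof -
  obtain i where "i < length vs" "vs ! i = v" using v by (metis in_set_conv_nth)
  moreover have "length vs = Suc (length es)"
    using T by (simp add: closed_strict_trail_def is_walk_def)
  ultimately show ?thesis using closed_strict_trail_rotate[OF T, of i] that by auto
qed

lemma closed_strict_trail_merge:
  assumes T1: "closed_strict_trail V E inc vs1 es1" and T2: "closed_strict_trail V E inc vs2 es2"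
    and disj: "set es1 \<inter> set es2 = {}" and v: "v \<in> set vs1" "v \<in> set vs2"
  obtains vs es where "closed_strict_trail V E inc vs es" "set es = set es1 \<union> set es2"
proof -
  obtain r1 f1 where R1: "closed_strict_trail V E inc r1 f1" "hd r1 = v" "set f1 = set es1"
    using closed_strict_trail_rotate_to[OF T1 v(1)] .
  obtain r2 f2 where R2: "closed_strict_trail V E inc r2 f2" "hd r2 = v" "set f2 = set es2"
    using closed_strict_trail_rotate_to[OF T2 v(2)] .
  have w1: "is_walk V E inc r1 f1" and w2: "is_walk V E inc r2 f2"
    and l1: "length f1 \<ge> 2" and l2: "length f2 \<ge> 2"
    and c1: "last r1 = v" and c2: "last r2 = v"
    and d1: "distinct f1" and d2: "distinct f2"
    using R1 R2 by (auto simp: closed_strict_trail_def)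
  have len: "length r1 = Suc (length f1)" "length r2 = Suc (length f2)"
    using w1 w2 by (auto simp: is_walk_def)
  have W: "is_walk V E inc (r1 @ tl r2) (f1 @ f2)"
    using is_walk_append[OF w1 w2] c1 R2(2) by simp
  have "tl r2 \<noteq> []" using len(2) l2 by (cases r2) auto
  then have "hd (r1 @ tl r2) = last (r1 @ tl r2)"
    using R1(2) c2 len(1) by (cases r1) (auto simp: last_tl)
  moreover have "distinct (f1 @ f2)" using R1(3) R2(3) d1 d2 disj by auto
  ultimately have "closed_strict_trail V E inc (r1 @ tl r2) (f1 @ f2)"
    using W l1 unfolding closed_strict_trail_def by simp
  then show ?thesis using that R1(3) R2(3) by simp
qed

section \<open>Decompositions into closed strict trails\<close>

definition trail_decomposition ::
    "'v set \<Rightarrow> 'e set \<Rightarrow> ('e \<Rightarrow> 'v set) \<Rightarrow> ('v list \<times> 'e list) set \<Rightarrow> bool" where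
  "trail_decomposition V E inc F \<longleftrightarrow> finite F \<and>
     (\<forall>(vs, es)\<in>F. closed_strict_trail V E inc vs es) \<and>
     (\<Union>T\<in>F. set (snd T)) = E \<and>
     pairwise (\<lambda>T T'. set (snd T) \<inter> set (snd T') = {}) F"

lemma euler_family_if_anchor_disjoint:
  assumes "trail_decomposition V E inc F"
    and "\<forall>T\<in>F. \<forall>T'\<in>F. T \<noteq> T' \<longrightarrow> set (fst T) \<inter> set (fst T') = {}"
  shows "euler_family V E inc F"
proof -
  have "\<exists>!T\<in>F. e \<in> set (snd T)" if "e \<in> E" for e
    using assms(1) that unfolding trail_decomposition_def pairwise_def by blast
  then show ?thesis using assms unfolding trail_decomposition_def euler_family_def by blast
qed

lemma trail_decomposition_merge:
  assumes F: "trail_decomposition V E inc F"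
    and T: "T1 \<in> F" "T2 \<in> F" "T1 \<noteq> T2" "set (fst T1) \<inter> set (fst T2) \<noteq> {}"
  obtains F' where "trail_decomposition V E inc F'" "card F' < card F"
proof -
  obtain vs1 es1 vs2 es2 where t: "T1 = (vs1, es1)" "T2 = (vs2, es2)" by fastforce
  have fin: "finite F" and trails: "\<And>vs es. (vs, es) \<in> F \<Longrightarrow> closed_strict_trail V E inc vs es"
    and cover: "(\<Union>T\<in>F. set (snd T)) = E"
    and pw: "pairwise (\<lambda>T T'. set (snd T) \<inter> set (snd T') = {}) F"
    using F unfolding trail_decomposition_def by auto
  have "set es1 \<inter> set es2 = {}" using pairwiseD[OF pw T(1-3)] t by simp
  moreover obtain v where "v \<in> set vs1" "v \<in> set vs2" using T t by auto
  ultimately obtain vs es where M: "closed_strict_trail V E inc vs es" "set es = set es1 \<union> set es2"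
    using closed_strict_trail_merge trails T(1,2) t by metis
  define F' where "F' = insert (vs, es) (F - {T1, T2})"
  have "card F' \<le> Suc (card (F - {T1, T2}))"
    unfolding F'_def using fin by (simp add: card_insert_if)
  also have "\<dots> < card F"
    using T fin card_mono[OF fin, of "{T1, T2}"] by (simp add: card_Diff_subset)
  finally have "card F' < card F" .
  moreover have "trail_decomposition V E inc F'"
    unfolding trail_decomposition_def
  proof (intro conjI)
    show "finite F'" using fin unfolding F'_def by simp
    show "\<forall>(vs, es)\<in>F'. closed_strict_trail V E inc vs es"
      using trails M(1) unfolding F'_def by auto
    have "F = insert T1 (insert T2 (F - {T1, T2}))" using T by auto
    then have "(\<Union>T\<in>F. set (snd T)) = set es \<union> (\<Union>T\<in>F - {T1, T2}. set (snd T))"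
      using M(2) t by (metis (no_types, lifting) UN_insert snd_conv sup_assoc)
    then show "(\<Union>T\<in>F'. set (snd T)) = E"
      using cover unfolding F'_def by simp
    have "set es \<inter> set (snd T) = {}" if "T \<in> F - {T1, T2}" for T
      using pairwiseD[OF pw T(1), of T] pairwiseD[OF pw T(2), of T] that M(2) t by auto
    moreover have "pairwise (\<lambda>T T'. set (snd T) \<inter> set (snd T') = {}) (F - {T1, T2})"
      using pw by (rule pairwise_subset) blast
    ultimately show "pairwise (\<lambda>T T'. set (snd T) \<inter> set (snd T') = {}) F'"
      unfolding F'_def by (simp add: pairwise_insert Int_commute)
  qed
  ultimately show ?thesis using that by blast
qed

lemma quasi_eulerian_if_trail_decomposition:
  assumes "trail_decomposition V E inc F"
  shows "quasi_eulerian V E inc"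
  using assms
proof (induction "card F" arbitrary: F rule: less_induct)
  case less
  show ?case
  proof (cases "\<forall>T\<in>F. \<forall>T'\<in>F. T \<noteq> T' \<longrightarrow> set (fst T) \<inter> set (fst T') = {}")
    case True
    then show ?thesis
      using euler_family_if_anchor_disjoint[OF less.prems] unfolding quasi_eulerian_def by blast
  next
    case False
    then show ?thesis
      using trail_decomposition_merge[OF less.prems] less.hyps by blast
  qed
qed

section \<open>Proper list colourings of cycles\<close>

definition cycle_list_colouring :: "nat \<Rightarrow> (nat \<Rightarrow> 'a set) \<Rightarrow> (nat \<Rightarrow> 'a) \<Rightarrow> bool" where
  "cycle_list_colouring k Ls a \<longleftrightarrow> (\<forall>i<k. a i \<in> Ls i \<and> a i \<noteq> a (Suc i mod k))"

lemma card_ge_2_ex_other: "2 \<le> card A \<Longrightarrow> \<exists>x\<in>A. x \<noteq> y"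
proof (rule ccontr)
  assume "2 \<le> card A" and "\<not> (\<exists>x\<in>A. x \<noteq> y)"
  then have "A \<subseteq> {y}" by auto
  then have "card A \<le> 1" using card_mono[of "{y}" A] by simp
  then show False using \<open>2 \<le> card A\<close> by simp
qed

lemma path_list_colouring:
  assumes x: "x \<in> Ls 0" and card: "\<forall>i<k. 2 \<le> card (Ls i)"
  shows "\<exists>a. a 0 = x \<and> (\<forall>i<k. a i \<in> Ls i) \<and> (\<forall>i. Suc i < k \<longrightarrow> a i \<noteq> a (Suc i))"
  using card
proof (induction k)
  case 0
  then show ?case by (intro exI[of _ "\<lambda>_. x"]) simp
next
  case (Suc k)
  show ?case
  proof (cases "k = 0")
    case True
    then show ?thesis using x by (intro exI[of _ "\<lambda>_. x"]) auto
  next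
    case False
    then obtain j where j: "k = Suc j" using not0_implies_Suc by blast
    have "\<forall>i<k. 2 \<le> card (Ls i)" using Suc.prems by simp
    then obtain a where a: "a 0 = x" "\<forall>i<k. a i \<in> Ls i" "\<forall>i. Suc i < k \<longrightarrow> a i \<noteq> a (Suc i)"
      using Suc.IH by blast
    have "2 \<le> card (Ls k)" using Suc.prems by simp
    then obtain y where y: "y \<in> Ls k" "y \<noteq> a j"
      using card_ge_2_ex_other[of "Ls k" "a j"] by blast
    let ?a = "a(k := y)"
    have "?a i \<in> Ls i" if "i < Suc k" for i
      using a(2) y(1) that by (cases "i = k") auto
    moreover have "?a i \<noteq> ?a (Suc i)" if "Suc i < Suc k" for i
    proof (cases "Suc i = k")
      case True
      then show ?thesis using y(2) j by auto
    next
      case False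
      then have "Suc i < k" using that by simp
      then show ?thesis using a(3) by simp
    qed
    moreover have "?a 0 = x" using a(1) False by simp
    ultimately show ?thesis by (intro exI[of _ ?a]) blast
  qed
qed

lemma cycle_list_colouring_if_path:
  assumes "\<forall>i<k. a i \<in> Ls i" "\<forall>i. Suc i < k \<longrightarrow> a i \<noteq> a (Suc i)" "a (k - 1) \<noteq> a 0"
  shows "cycle_list_colouring k Ls a"
  unfolding cycle_list_colouring_def
proof (intro allI impI)
  fix i assume i: "i < k"
  show "a i \<in> Ls i \<and> a i \<noteq> a (Suc i mod k)"
  proof (cases "Suc i < k")
    case False
    then have "Suc i = k" using i by simp
    then have "i = k - 1" "Suc i mod k = 0" by auto
    then show ?thesis using assms i by simp
  next
    case True
    then show ?thesis using assms i by simp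
  qed
qed

lemma cycle_list_colouring_card_ge_3:
  assumes k: "2 \<le> k" and card: "\<forall>i<k. 3 \<le> card (Ls i)"
  shows "\<exists>a. cycle_list_colouring k Ls a"
proof -
  have "2 \<le> card (Ls 0)" using card[rule_format, of 0] k by simp
  then obtain x where x: "x \<in> Ls 0" by fastforce
  define Ls' where "Ls' = Ls(k - 1 := Ls (k - 1) - {x})"
  have "2 \<le> card (Ls' i)" if "i < k" for i
  proof -
    have "finite (Ls i)" using card that by (intro card_ge_0_finite) auto
    then show ?thesis using card that unfolding Ls'_def by (auto simp: card_Diff_singleton_if)
  qed
  moreover have "x \<in> Ls' 0" using x k unfolding Ls'_def by simp
  ultimately obtain a where a: "a 0 = x" "\<forall>i<k. a i \<in> Ls' i" "\<forall>i. Suc i < k \<longrightarrow> a i \<noteq> a (Suc i)"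
    using path_list_colouring[of x Ls' k] by blast
  have "Ls' i \<subseteq> Ls i" for i unfolding Ls'_def by simp
  then have "\<forall>i<k. a i \<in> Ls i" using a(2) by blast
  moreover have "a (k - 1) \<noteq> a 0"
    using a(1) a(2)[rule_format, of "k - 1"] k unfolding Ls'_def by simp
  ultimately show ?thesis using cycle_list_colouring_if_path[of k a Ls] a(3) by blast
qed

lemma cycle_list_colouring_rotate:
  assumes s: "s < k" and a: "cycle_list_colouring k (\<lambda>i. Ls ((i + s) mod k)) a"
  shows "cycle_list_colouring k Ls (\<lambda>i. a ((i + (k - s)) mod k))"
  unfolding cycle_list_colouring_def
proof (intro allI impI conjI)
  fix i assume i: "i < k"
  let ?j = "(i + (k - s)) mod k"
  have "(?j + s) mod k = (i + k) mod k" using s by (simp add: mod_simps)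
  then have "(?j + s) mod k = i" using i by simp
  moreover have "?j < k" using i by simp
  ultimately show "a ?j \<in> Ls i" using a unfolding cycle_list_colouring_def by metis
  have "Suc ?j mod k = (Suc i mod k + (k - s)) mod k" by (simp add: mod_simps)
  then show "a ?j \<noteq> a ((Suc i mod k + (k - s)) mod k)"
    using a \<open>?j < k\<close> unfolding cycle_list_colouring_def by metis
qed

lemma cycle_list_colouring_even_card_ge_2:
  assumes even: "even k" and k: "2 \<le> k" and card: "\<forall>i<k. 2 \<le> card (Ls i)"
  shows "\<exists>a. cycle_list_colouring k Ls a"
proof (cases "\<exists>j<k. \<not> Ls (Suc j mod k) \<subseteq> Ls j")
  case True
  then obtain j x where j: "j < k" and x: "x \<in> Ls (Suc j mod k)" "x \<notin> Ls j" by blast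
  define M where "M i = Ls ((i + Suc j) mod k)" for i
  have "(k - 1 + Suc j) mod k = (j + k) mod k" using k by (simp add: algebra_simps)
  then have last: "M (k - 1) = Ls j" using j unfolding M_def by simp
  obtain a where a: "a 0 = x" "\<forall>i<k. a i \<in> M i" "\<forall>i. Suc i < k \<longrightarrow> a i \<noteq> a (Suc i)"
    using path_list_colouring[of x M k] card x unfolding M_def by auto
  have "a (k - 1) \<noteq> a 0" using a(1) a(2)[rule_format, of "k - 1"] x(2) last k by auto
  then have "cycle_list_colouring k (\<lambda>i. Ls ((i + Suc j mod k) mod k)) a"
    using cycle_list_colouring_if_path[OF a(2,3)] unfolding M_def by (simp add: mod_simps)
  moreover have "Suc j mod k < k" using k by simp
  ultimately show ?thesis using cycle_list_colouring_rotate by blast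
next
  case False
  then have down: "Ls (Suc j mod k) \<subseteq> Ls j" if "j < k" for j using that by blast
  have "Ls 0 \<subseteq> Ls (k - 1 - m)" if "m < k" for m
    using that
  proof (induction m)
    case 0
    then show ?case using down[of "k - 1"] k by simp
  next
    case (Suc m)
    then have "Suc (k - 1 - Suc m) = k - 1 - m" by simp
    then show ?case using Suc down[of "k - 1 - Suc m"] by simp
  qed
  then have common: "Ls 0 \<subseteq> Ls i" if "i < k" for i
    using that \<open>\<And>m. m < k \<Longrightarrow> Ls 0 \<subseteq> Ls (k - 1 - m)\<close>[of "k - 1 - i"] by simp
  have card0: "2 \<le> card (Ls 0)" using card k by simp
  then obtain p where p: "p \<in> Ls 0" by fastforce
  obtain q where q: "q \<in> Ls 0" "q \<noteq> p" using card_ge_2_ex_other[OF card0, of p] by blast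
  define a where "a i = (if even i then p else q)" for i :: nat
  have "cycle_list_colouring k Ls a"
    using common p q even k unfolding a_def by (intro cycle_list_colouring_if_path) auto
  then show ?thesis by blast
qed

section \<open>Cycles in graphs\<close>

text \<open>A cycle of length 2 traverses one edge of the graph back and forth; such cycles are the
  components of a 1-regular spanning subgraph.\<close>

definition graph_cycle :: "('a \<Rightarrow> 'a \<Rightarrow> bool) \<Rightarrow> 'a list \<Rightarrow> bool" where
  "graph_cycle adj c \<longleftrightarrow> distinct c \<and> 2 \<le> length c \<and>
     (\<forall>i<length c. adj (c ! i) (c ! (Suc i mod length c)))"

lemma graph_cycle_if_hamilton_cycle:
  assumes "hamilton_cycle X adj cs"
  shows "graph_cycle adj cs" "3 \<le> length cs" "set cs = X"
proof -
  have k: "3 \<le> length cs" and adj: "\<forall>i < length cs - 1. adj (cs ! i) (cs ! Suc i)"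
    and last: "adj (last cs) (hd cs)"
    using assms unfolding hamilton_cycle_def by auto
  have "adj (cs ! i) (cs ! (Suc i mod length cs))" if "i < length cs" for i
  proof (cases "Suc i < length cs")
    case False
    then have "Suc i = length cs" using that by simp
    then have "i = length cs - 1" "Suc i mod length cs = 0" by auto
    moreover have "cs \<noteq> []" using k by auto
    ultimately show ?thesis using last by (simp add: last_conv_nth hd_conv_nth)
  qed (use adj in auto)
  then show "graph_cycle adj cs" using assms k unfolding graph_cycle_def hamilton_cycle_def by auto
  show "3 \<le> length cs" "set cs = X" using assms unfolding hamilton_cycle_def by auto
qed

lemma bipartite_graph_cycle_even:
  assumes bip: "bipartite X adj" and sub: "set c \<subseteq> X" and c: "graph_cycle adj c"
  shows "even (length c)"
proof -
  let ?k = "length c"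
  obtain A where A: "\<forall>x\<in>X. \<forall>y\<in>X. adj x y \<longrightarrow> (x \<in> A \<longleftrightarrow> y \<notin> A)"
    using bip unfolding bipartite_def by blast
  have k: "2 \<le> ?k" and adj: "\<forall>i<?k. adj (c ! i) (c ! (Suc i mod ?k))"
    using c unfolding graph_cycle_def by auto
  have flip: "c ! i \<in> A \<longleftrightarrow> c ! (Suc i mod ?k) \<notin> A" if "i < ?k" for i
  proof -
    have "0 < ?k" using that by arith
    then have "Suc i mod ?k < ?k" by simp
    then have "c ! i \<in> X" "c ! (Suc i mod ?k) \<in> X" using sub that by auto
    then show ?thesis using A adj that by blast
  qed
  have parity: "c ! i \<in> A \<longleftrightarrow> (c ! 0 \<in> A \<longleftrightarrow> even i)" if "i < ?k" for i
    using that
  proof (induction i)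
    case (Suc i)
    then show ?case using flip[of i] by auto
  qed simp
  have "Suc (?k - 1) = ?k" using k by simp
  then have "Suc (?k - 1) mod ?k = 0" by (metis mod_self)
  then have "c ! (?k - 1) \<in> A \<longleftrightarrow> c ! 0 \<notin> A" using flip[of "?k - 1"] k by simp
  moreover have "?k - 1 < ?k" using k by arith
  ultimately have "odd (?k - 1)" using parity by blast
  then show ?thesis using k by simp
qed

lemma distinct_mod_successors:
  assumes "3 \<le> k" "i < k"
  shows "distinct [i, Suc i mod k, Suc (Suc i mod k) mod k]"
proof -
  have "Suc (Suc i mod k) mod k = Suc (Suc i) mod k" by (simp add: mod_Suc_eq)
  moreover consider "Suc (Suc i) < k" | "Suc (Suc i) = k" | "Suc i = k" using assms by linarith
  then have "distinct [i, Suc i mod k, Suc (Suc i) mod k]"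
    by cases (use assms in \<open>auto simp: mod_Suc\<close>)
  ultimately show ?thesis by simp
qed

fun nonbacktracking_walk :: "('a \<Rightarrow> 'a set) \<Rightarrow> 'a \<Rightarrow> nat \<Rightarrow> 'a" where
  "nonbacktracking_walk N x 0 = x"
| "nonbacktracking_walk N x (Suc 0) = (SOME y. y \<in> N x)"
| "nonbacktracking_walk N x (Suc (Suc n)) =
     (SOME z. z \<in> N (nonbacktracking_walk N x (Suc n)) \<and> z \<noteq> nonbacktracking_walk N x n)"

lemma card_2_eq_pair: "card A = 2 \<Longrightarrow> a \<in> A \<Longrightarrow> b \<in> A \<Longrightarrow> a \<noteq> b \<Longrightarrow> A = {a, b}"
  by (auto simp: card_2_iff)

locale one_two_regular =
  fixes X :: "'a set" and N :: "'a \<Rightarrow> 'a set"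
  assumes finite_X: "finite X"
    and N_sym: "y \<in> N x \<Longrightarrow> x \<in> N y"
    and N_irrefl: "x \<notin> N x"
    and N_regular: "x \<in> X \<Longrightarrow> (card (N x) = 1 \<or> card (N x) = 2) \<and> (\<forall>y\<in>N x. card (N y) = card (N x))"
begin

definition component_cycle :: "'a list \<Rightarrow> bool" where
  "component_cycle c \<longleftrightarrow> graph_cycle (\<lambda>x y. y \<in> N x) c \<and> (\<forall>z\<in>set c. N z \<subseteq> set c) \<and>
     (card (N (hd c)) = 2 \<longrightarrow> 3 \<le> length c)"

lemma component_cycle_of_degree_1:
  assumes x: "x \<in> Y" and Y: "Y \<subseteq> X" "\<forall>y\<in>Y. N y \<subseteq> Y" and deg: "card (N x) = 1"
  shows "\<exists>c. component_cycle c \<and> x \<in> set c \<and> set c \<subseteq> Y"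
proof -
  obtain y where Nx: "N x = {y}" using deg by (metis card_1_singletonE)
  have "card (N y) = 1" using N_regular[of x] x Y Nx deg by auto
  moreover have "x \<in> N y" using N_sym Nx by auto
  ultimately have Ny: "N y = {x}" by (metis card_1_singletonE singletonD)
  have "x \<noteq> y" using N_irrefl Nx by auto
  moreover have "\<forall>i<length [x, y]. [x, y] ! (Suc i mod length [x, y]) \<in> N ([x, y] ! i)"
    using Nx Ny by (auto simp: less_Suc_eq)
  ultimately have "component_cycle [x, y]"
    unfolding component_cycle_def graph_cycle_def using Nx Ny deg by auto
  moreover have "y \<in> Y" using Y x Nx by auto
  ultimately show ?thesis using x by (intro exI[of _ "[x, y]"]) auto
qed

lemma cycle_closed_if_degree_2:
  assumes c: "graph_cycle (\<lambda>x y. y \<in> N x) c" and k: "3 \<le> length c"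
    and deg: "\<forall>z\<in>set c. card (N z) = 2"
  shows "\<forall>z\<in>set c. N z \<subseteq> set c"
proof
  let ?k = "length c"
  fix z assume "z \<in> set c"
  then obtain i where i: "i < ?k" "z = c ! i" by (metis in_set_conv_nth)
  define p where "p = (i + (?k - 1)) mod ?k"
  have "0 < ?k" using k by arith
  then have "p < ?k" unfolding p_def by simp
  moreover have "Suc p mod ?k = Suc (i + (?k - 1)) mod ?k"
    unfolding p_def by (simp add: mod_Suc_eq)
  moreover have "Suc (i + (?k - 1)) = i + ?k" using \<open>0 < ?k\<close> by simp
  ultimately have p: "p < ?k" "Suc p mod ?k = i" using i by simp_all
  have adj: "c ! (Suc j mod ?k) \<in> N (c ! j)" if "j < ?k" for j
    using c that unfolding graph_cycle_def by blast
  have "p \<noteq> Suc i mod ?k" using distinct_mod_successors[OF k p(1)] p(2) by auto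
  moreover have "Suc i mod ?k < ?k" using \<open>0 < ?k\<close> by simp
  ultimately have "c ! p \<noteq> c ! (Suc i mod ?k)"
    using c p(1) unfolding graph_cycle_def by (simp add: nth_eq_iff_index_eq)
  moreover have "c ! p \<in> N z" using adj[OF p(1)] p(2) i(2) N_sym by simp
  moreover have "c ! (Suc i mod ?k) \<in> N z" using adj[OF i(1)] i(2) by simp
  moreover have "card (N z) = 2" using deg i by simp
  ultimately have "N z = {c ! p, c ! (Suc i mod ?k)}" using card_2_eq_pair by metis
  then show "N z \<subseteq> set c" using p(1) \<open>Suc i mod ?k < ?k\<close> by simp
qed

end

locale degree_two_walk = one_two_regular +
  fixes Y and x
  assumes Y_sub: "Y \<subseteq> X" and Y_closed: "\<forall>y\<in>Y. N y \<subseteq> Y"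
    and start: "x \<in> Y" and start_degree: "card (N x) = 2"
begin

definition walk :: "nat \<Rightarrow> 'a" where
  "walk = nonbacktracking_walk N x"

lemma walk_choice:
  assumes "card (N (walk (Suc n))) = 2"
  shows "walk (Suc (Suc n)) \<in> N (walk (Suc n)) \<and> walk (Suc (Suc n)) \<noteq> walk n"
proof -
  obtain z where "z \<in> N (walk (Suc n))" "z \<noteq> walk n"
    using assms card_ge_2_ex_other[of "N (walk (Suc n))" "walk n"] by auto
  then show ?thesis unfolding walk_def by simp (rule someI, blast)
qed

lemma walk_step: "walk n \<in> Y \<and> card (N (walk n)) = 2 \<and> walk (Suc n) \<in> N (walk n)"
proof (induction n)
  case 0
  have "N x \<noteq> {}" using start_degree by auto
  then show ?case using start start_degree unfolding walk_def by (simp add: some_in_eq)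
next
  case (Suc n)
  then have in_Y: "walk (Suc n) \<in> Y" using Y_closed by auto
  moreover have "card (N (walk (Suc n))) = 2"
    using Suc N_regular[of "walk n"] Y_sub by auto
  ultimately show ?case using walk_choice by blast
qed

lemma walk_nonbacktracking: "walk (Suc (Suc n)) \<noteq> walk n"
  using walk_choice walk_step by blast

lemma walk_neighbourhood: "N (walk (Suc n)) = {walk n, walk (Suc (Suc n))}"
  using walk_step[of n] walk_step[of "Suc n"] walk_nonbacktracking[of n] N_sym card_2_eq_pair
  by metis

text \<open>The first vertex to repeat is the start: any other vertex would acquire a third
  neighbour on the walk.\<close>

lemma walk_returns: "\<exists>k. 3 \<le> k \<and> walk k = x \<and> inj_on walk {0..<k}"
proof -
  have "\<not> inj walk"
  proof
    assume "inj walk"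
    moreover have "range walk \<subseteq> Y" using walk_step by auto
    moreover have "finite Y" using Y_sub finite_X finite_subset by blast
    ultimately show False by (metis finite_imageD finite_subset infinite_UNIV_nat)
  qed
  then have "\<exists>j. \<exists>i<j. walk i = walk j" unfolding inj_def by (metis linorder_neqE_nat)
  define k where "k = (LEAST j. \<exists>i<j. walk i = walk j)"
  obtain i0 where i0: "i0 < k" "walk i0 = walk k"
    using LeastI_ex[OF \<open>\<exists>j. \<exists>i<j. walk i = walk j\<close>] unfolding k_def by blast
  have below: "walk a \<noteq> walk b" if "a < b" "b < k" for a b
    using not_less_Least that unfolding k_def by blast
  have "i0 = 0"
  proof (rule ccontr)
    assume "i0 \<noteq> 0"
    then obtain i j where i: "i0 = Suc i" and j: "k = Suc j" using i0 not0_implies_Suc by force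
    have "walk j \<in> N (walk i0)" using walk_step[of j] N_sym i0 j by simp
    then have "walk j = walk i \<or> walk j = walk (Suc (Suc i))" using walk_neighbourhood i by auto
    moreover have "walk j \<noteq> walk i" using below[of i j] i j i0 by simp
    moreover have "walk j \<noteq> walk (Suc (Suc i))"
    proof (cases "Suc (Suc i) < j")
      case True
      then show ?thesis using below[of "Suc (Suc i)" j] j by simp
    next
      case False
      then consider "j = Suc (Suc i)" | "j = i0" using i j i0 by linarith
      then show ?thesis
        using walk_nonbacktracking[of i0] walk_step[of i0] N_irrefl i i0 j by cases auto
    qed
    ultimately show False by blast
  qed
  then have return: "walk k = x" using i0 unfolding walk_def by simp
  have "k \<noteq> 1" using walk_step[of 0] N_irrefl return unfolding walk_def by auto
  moreover have "k \<noteq> 2"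
    using walk_nonbacktracking[of 0] return unfolding walk_def by (auto simp: numeral_2_eq_2)
  moreover have "inj_on walk {0..<k}"
    by (rule inj_onI) (metis atLeastLessThan_iff below linorder_neqE_nat)
  ultimately show ?thesis using return i0 by (intro exI[of _ k]) auto
qed

lemma component_cycle_through_start: "\<exists>c. component_cycle c \<and> x \<in> set c \<and> set c \<subseteq> Y"
proof -
  obtain k where k: "3 \<le> k" "walk k = x" "inj_on walk {0..<k}" using walk_returns by blast
  define c where "c = map walk [0..<k]"
  have "c ! (Suc i mod k) \<in> N (c ! i)" if "i < k" for i
  proof (cases "Suc i < k")
    case False
    then have "Suc i = k" using that by simp
    then show ?thesis using walk_step[of i] k(2) that unfolding c_def walk_def by auto
  qed (use walk_step that in \<open>auto simp: c_def\<close>)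
  then have cycle: "graph_cycle (\<lambda>x y. y \<in> N x) c"
    unfolding graph_cycle_def c_def using k by (simp add: distinct_map)
  moreover have "\<forall>z\<in>set c. card (N z) = 2" using walk_step unfolding c_def by auto
  moreover have "length c = k" unfolding c_def by simp
  ultimately have "component_cycle c"
    using cycle_closed_if_degree_2 k(1) unfolding component_cycle_def by simp
  moreover have "x \<in> set c"
    using nth_mem[of 0 c] k(1) unfolding c_def walk_def by simp
  moreover have "set c \<subseteq> Y" using walk_step unfolding c_def by auto
  ultimately show ?thesis by blast
qed

end

context one_two_regular
begin

lemma component_cycle_through:
  assumes x: "x \<in> Y" and Y: "Y \<subseteq> X" "\<forall>y\<in>Y. N y \<subseteq> Y"
  shows "\<exists>c. component_cycle c \<and> x \<in> set c \<and> set c \<subseteq> Y"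
proof -
  consider "card (N x) = 1" | "card (N x) = 2" using N_regular x Y by blast
  then show ?thesis
  proof cases
    case 1
    then show ?thesis using component_cycle_of_degree_1 x Y by blast
  next
    case 2
    interpret degree_two_walk X N Y x by unfold_locales (use x Y 2 in auto)
    show ?thesis by (rule component_cycle_through_start)
  qed
qed

lemma component_cycle_partition:
  assumes "Y \<subseteq> X" "\<forall>y\<in>Y. N y \<subseteq> Y"
  shows "\<exists>C. finite C \<and> (\<forall>c\<in>C. component_cycle c) \<and> (\<Union>c\<in>C. set c) = Y \<and>
           pairwise (\<lambda>c c'. set c \<inter> set c' = {}) C"
  using assms
proof (induction "card Y" arbitrary: Y rule: less_induct)
  case less
  show ?case
  proof (cases "Y = {}")
    case True
    then show ?thesis by (intro exI[of _ "{}"]) auto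
  next
    case False
    then obtain x where "x \<in> Y" by blast
    then obtain c where c: "component_cycle c" "x \<in> set c" "set c \<subseteq> Y"
      using component_cycle_through[of x Y] less.prems by blast
    define Y' where "Y' = Y - set c"
    have "finite Y" using less.prems finite_X finite_subset by blast
    moreover have "Y' \<subset> Y" unfolding Y'_def using c(2) \<open>x \<in> Y\<close> by blast
    ultimately have lt: "card Y' < card Y" by (rule psubset_card_mono)
    have sub: "Y' \<subseteq> X" using less.prems unfolding Y'_def by auto
    have closed: "\<forall>y\<in>Y'. N y \<subseteq> Y'"
    proof (intro ballI subsetI)
      fix y w assume y: "y \<in> Y'" and w: "w \<in> N y"
      have "w \<notin> set c"
      proof
        assume "w \<in> set c"
        then have "y \<in> set c" using c(1) N_sym[OF w] unfolding component_cycle_def by blast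
        then show False using y unfolding Y'_def by blast
      qed
      moreover have "w \<in> Y" using less.prems y w unfolding Y'_def by blast
      ultimately show "w \<in> Y'" unfolding Y'_def by blast
    qed
    obtain C where C: "finite C" "\<forall>c\<in>C. component_cycle c" "(\<Union>c\<in>C. set c) = Y'"
      "pairwise (\<lambda>c c'. set c \<inter> set c' = {}) C"
      using less.hyps[OF lt sub closed] by blast
    have "(\<Union>c'\<in>insert c C. set c') = Y" using C(3) c(3) unfolding Y'_def by auto
    moreover have "set c \<inter> set c' = {}" if "c' \<in> C" for c'
      using C(3) that unfolding Y'_def by blast
    then have "pairwise (\<lambda>c c'. set c \<inter> set c' = {}) (insert c C)"
      using C(4) by (simp add: pairwise_insert Int_commute)
    ultimately show ?thesis using C(1,2) c(1) by (intro exI[of _ "insert c C"]) simp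
  qed
qed

end

text \<open>As adjacent vertices have equal degree, every component of S is 1-regular or 2-regular.\<close>

definition locally_1_2_regular :: "'a set \<Rightarrow> 'a set set \<Rightarrow> bool" where
  "locally_1_2_regular X S \<longleftrightarrow>
     (\<forall>x\<in>X. (sdeg S x = 1 \<or> sdeg S x = 2) \<and> (\<forall>y. {x, y} \<in> S \<longrightarrow> sdeg S y = sdeg S x))"

lemma spanning_edges_mem:
  assumes "spanning_edges X adj S" "{x, y} \<in> S"
  shows "y \<in> X"
  using assms unfolding spanning_edges_def by (metis doubleton_eq_iff)

lemma locally_1_2_regular_if_2_factor:
  assumes "spanning_edges X adj S" "\<forall>x\<in>X. sdeg S x = 2"
  shows "locally_1_2_regular X S"
  using assms spanning_edges_mem unfolding locally_1_2_regular_def by metis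

lemma locally_1_2_regular_if_regular_components:
  assumes "\<forall>x\<in>X. (\<forall>y. sreach S x y \<longrightarrow> sdeg S y = 1) \<or> (\<forall>y. sreach S x y \<longrightarrow> sdeg S y = 2)"
  shows "locally_1_2_regular X S"
proof -
  have "sreach S x x" "{x, y} \<in> S \<Longrightarrow> sreach S x y" for x y
    unfolding sreach_def by auto
  then show ?thesis using assms unfolding locally_1_2_regular_def by metis
qed

lemma graph_cycle_partition_of_spanning:
  assumes fin: "finite E" and sym: "\<forall>x y. L x y \<longrightarrow> L y x" and irrefl: "\<forall>x. \<not> L x x"
    and sp: "spanning_edges E L S"
    and reg: "locally_1_2_regular E S"
  shows "\<exists>C. finite C \<and> (\<forall>c\<in>C. graph_cycle L c \<and> (sdeg S (hd c) = 2 \<longrightarrow> 3 \<le> length c)) \<and>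
           (\<Union>c\<in>C. set c) = E \<and> pairwise (\<lambda>c c'. set c \<inter> set c' = {}) C"
proof -
  define N where "N x = {y. {x, y} \<in> S}" for x
  have N_L: "L x y \<and> y \<in> E" if "y \<in> N x" for x y
  proof -
    have "{x, y} \<in> S" using that unfolding N_def by simp
    then obtain a b where ab: "a \<in> E" "b \<in> E" "L a b" "{x, y} = {a, b}"
      using sp unfolding spanning_edges_def by blast
    then have "(x = a \<and> y = b) \<or> (x = b \<and> y = a)" by (simp add: doubleton_eq_iff)
    then show ?thesis using ab sym by blast
  qed
  interpret one_two_regular E N
  proof
    show "finite E" by (rule fin)
    show "y \<in> N x \<Longrightarrow> x \<in> N y" for x y unfolding N_def by (simp add: insert_commute)
    show "x \<notin> N x" for x using N_L irrefl by blast
    show "x \<in> E \<Longrightarrow> (card (N x) = 1 \<or> card (N x) = 2) \<and> (\<forall>y\<in>N x. card (N y) = card (N x))" for x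
      using reg unfolding locally_1_2_regular_def N_def sdeg_def by simp
  qed
  obtain C where C: "finite C" "\<forall>c\<in>C. component_cycle c" "(\<Union>c\<in>C. set c) = E"
    "pairwise (\<lambda>c c'. set c \<inter> set c' = {}) C"
    using component_cycle_partition[of E] N_L by blast
  have "graph_cycle L c" if "graph_cycle (\<lambda>x y. y \<in> N x) c" for c
    using that N_L unfolding graph_cycle_def by blast
  moreover have "sdeg S = card \<circ> N" unfolding sdeg_def N_def by auto
  ultimately show ?thesis using C unfolding component_cycle_def by auto
qed

section \<open>Closed strict trails along cycles of intersection graphs\<close>

definition cyclic_links :: "('e \<Rightarrow> 'v set) \<Rightarrow> 'e list \<Rightarrow> nat \<Rightarrow> 'v set" where
  "cyclic_links inc c i = inc (c ! i) \<inter> inc (c ! (Suc i mod length c))"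

lemma closed_strict_trail_of_colouring:
  assumes H: "hypergraph V E inc" and d: "distinct c" and k: "2 \<le> length c"
    and sub: "set c \<subseteq> E" and a: "cycle_list_colouring (length c) (cyclic_links inc c) a"
  shows "closed_strict_trail V E inc (a (length c - 1) # map a [0..<length c]) c"
proof -
  let ?k = "length c"
  let ?vs = "a (?k - 1) # map a [0..<?k]"
  have a_in: "a i \<in> inc (c ! i)" "a i \<in> inc (c ! (Suc i mod ?k))" "a i \<noteq> a (Suc i mod ?k)"
    if "i < ?k" for i
    using a that unfolding cycle_list_colouring_def cyclic_links_def by auto
  have next_anchor: "?vs ! Suc i = a i" if "i < ?k" for i
    using that by simp
  have prev_anchor: "?vs ! i \<in> inc (c ! i) \<and> ?vs ! i \<noteq> a i" if i: "i < ?k" for i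
  proof (cases i)
    case 0
    have "Suc (?k - 1) = ?k" using k by simp
    then have "Suc (?k - 1) mod ?k = 0" by (metis mod_self)
    then show ?thesis using a_in[of "?k - 1"] k 0 by auto
  next
    case (Suc j)
    then have "Suc j mod ?k = i" using i by simp
    then show ?thesis using a_in[of j] i Suc by auto
  qed
  have "set ?vs \<subseteq> V"
  proof
    fix v assume "v \<in> set ?vs"
    then obtain i where "i < ?k" "v = a i" using k by auto
    then show "v \<in> V" using a_in sub H unfolding hypergraph_def by (meson nth_mem subsetD)
  qed
  then have "is_walk V E inc ?vs c"
    using sub next_anchor prev_anchor a_in(1) unfolding is_walk_def by auto
  moreover have "hd ?vs = last ?vs" using k by (simp add: last_map)
  ultimately show ?thesis using d k unfolding closed_strict_trail_def by simp
qed

lemma hdeg_ge_3: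
  assumes H: "hypergraph V E inc" and e: "{e1, e2, e3} \<subseteq> E" "distinct [e1, e2, e3]"
    and v: "v \<in> inc e1" "v \<in> inc e2" "v \<in> inc e3"
  shows "3 \<le> hdeg E inc v"
proof -
  have "finite E" using H by (simp add: hypergraph_def)
  then have "card {e1, e2, e3} \<le> hdeg E inc v"
    unfolding hdeg_def using e v by (intro card_mono) auto
  then show ?thesis using e(2) by simp
qed

lemma colouring_if_max_degree_2:
  assumes H: "hypergraph V E inc" and deg: "\<forall>v\<in>V. hdeg E inc v \<le> 2"
    and c: "graph_cycle (intersection_graph inc) c" and sub: "set c \<subseteq> E" and k: "3 \<le> length c"
  shows "\<exists>a. cycle_list_colouring (length c) (cyclic_links inc c) a"
proof -
  let ?k = "length c"
  define a where "a i = (SOME v. v \<in> cyclic_links inc c i)" for i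
  have a: "a i \<in> inc (c ! i) \<and> a i \<in> inc (c ! (Suc i mod ?k))" if "i < ?k" for i
  proof -
    have "cyclic_links inc c i \<noteq> {}"
      using c that unfolding graph_cycle_def intersection_graph_def cyclic_links_def by auto
    then have "a i \<in> cyclic_links inc c i" unfolding a_def by (simp add: some_in_eq)
    then show ?thesis unfolding cyclic_links_def by simp
  qed
  have "a i \<noteq> a (Suc i mod ?k)" if i: "i < ?k" for i
  proof
    assume eq: "a i = a (Suc i mod ?k)"
    let ?j = "Suc i mod ?k" and ?j' = "Suc (Suc i mod ?k) mod ?k"
    have "0 < ?k" using i by arith
    then have j: "?j < ?k" "?j' < ?k" by simp_all
    have v: "a i \<in> inc (c ! i)" "a i \<in> inc (c ! ?j)" "a i \<in> inc (c ! ?j')"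
      using a[OF i] a[OF j(1)] eq by simp_all
    have edges: "{c ! i, c ! ?j, c ! ?j'} \<subseteq> E" using sub i j by auto
    moreover have "distinct [c ! i, c ! ?j, c ! ?j']"
      using distinct_mod_successors[OF k i] c i j unfolding graph_cycle_def
      by (auto simp: nth_eq_iff_index_eq)
    ultimately have "3 \<le> hdeg E inc (a i)" using hdeg_ge_3[OF H] v by blast
    moreover have "a i \<in> V" using v(1) edges H unfolding hypergraph_def by blast
    ultimately show False using deg by fastforce
  qed
  then have "cycle_list_colouring ?k (cyclic_links inc c) a"
    using a unfolding cycle_list_colouring_def cyclic_links_def by blast
  then show ?thesis by blast
qed

definition case_a :: "'v set \<Rightarrow> 'e set \<Rightarrow> ('e \<Rightarrow> 'v set) \<Rightarrow> ('e \<Rightarrow> 'e \<Rightarrow> bool) \<Rightarrow> bool" where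
  "case_a V E inc L \<longleftrightarrow> (\<forall>v\<in>V. hdeg E inc v \<le> 2) \<and> L = intersection_graph inc"

definition case_bc :: "'e set \<Rightarrow> ('e \<Rightarrow> 'v set) \<Rightarrow> ('e \<Rightarrow> 'e \<Rightarrow> bool) \<Rightarrow> bool" where
  "case_bc E inc L \<longleftrightarrow>
     (L = intersection_graph_star 2 inc \<and> bipartite E L) \<or> L = intersection_graph_star 3 inc"

lemma closed_strict_trail_of_graph_cycle:
  assumes H: "hypergraph V E inc" and L: "case_a V E inc L \<or> case_bc E inc L"
    and c: "graph_cycle L c" and sub: "set c \<subseteq> E"
    and k: "3 \<le> length c \<or> case_bc E inc L"
  shows "\<exists>vs. closed_strict_trail V E inc vs c"
proof -
  let ?k = "length c"
  have k2: "2 \<le> ?k" and adj: "\<forall>i<?k. L (c ! i) (c ! (Suc i mod ?k))"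
    using c unfolding graph_cycle_def by auto
  have "\<exists>a. cycle_list_colouring ?k (cyclic_links inc c) a"
  proof (cases "L = intersection_graph_star 3 inc")
    case True
    then have "\<forall>i<?k. 3 \<le> card (cyclic_links inc c i)"
      using adj unfolding intersection_graph_star_def cyclic_links_def by blast
    then show ?thesis using cycle_list_colouring_card_ge_3 k2 by blast
  next
    case not3: False
    show ?thesis
    proof (cases "L = intersection_graph_star 2 inc \<and> bipartite E L")
      case True
      then have "\<forall>i<?k. 2 \<le> card (cyclic_links inc c i)"
        using adj unfolding intersection_graph_star_def cyclic_links_def by blast
      moreover have "even ?k" using bipartite_graph_cycle_even True sub c by blast
      ultimately show ?thesis using cycle_list_colouring_even_card_ge_2 k2 by blast
    next
      case False
      then have "case_a V E inc L" "3 \<le> ?k" using L k not3 unfolding case_bc_def by auto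
      then show ?thesis
        using colouring_if_max_degree_2[OF H _ _ sub] c unfolding case_a_def by blast
    qed
  qed
  then show ?thesis using closed_strict_trail_of_colouring[OF H _ k2 sub] c
    unfolding graph_cycle_def by blast
qed

lemma case_graph_sym_irrefl:
  assumes "case_a V E inc L \<or> case_bc E inc L"
  shows "\<forall>x y. L x y \<longrightarrow> L y x" "\<forall>x. \<not> L x x"
  using assms unfolding case_a_def case_bc_def intersection_graph_def intersection_graph_star_def
  by (auto simp: Int_commute)

lemma quasi_eulerian_if_cycle_partition:
  assumes H: "hypergraph V E inc" and L: "case_a V E inc L \<or> case_bc E inc L"
    and fin: "finite C"
    and cycles: "\<forall>c\<in>C. graph_cycle L c \<and> (3 \<le> length c \<or> case_bc E inc L)"
    and cover: "(\<Union>c\<in>C. set c) = E" and disj: "pairwise (\<lambda>c c'. set c \<inter> set c' = {}) C"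
  shows "quasi_eulerian V E inc"
proof -
  define anchors where "anchors c = (SOME vs. closed_strict_trail V E inc vs c)" for c
  have trail: "closed_strict_trail V E inc (anchors c) c" if "c \<in> C" for c
    unfolding anchors_def using closed_strict_trail_of_graph_cycle[OF H L] cycles cover that
    by (metis (no_types, lifting) UN_I someI_ex subsetI)
  define F where "F = (\<lambda>c. (anchors c, c)) ` C"
  have "trail_decomposition V E inc F"
    unfolding trail_decomposition_def
  proof (intro conjI)
    show "finite F" unfolding F_def using fin by simp
    show "\<forall>(vs, es)\<in>F. closed_strict_trail V E inc vs es" unfolding F_def using trail by auto
    show "(\<Union>T\<in>F. set (snd T)) = E" unfolding F_def using cover by simp
    show "pairwise (\<lambda>T T'. set (snd T) \<inter> set (snd T') = {}) F"
      using disj unfolding F_def pairwise_def by auto (metis disjoint_iff)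
  qed
  then show ?thesis by (rule quasi_eulerian_if_trail_decomposition)
qed

lemma quasi_eulerian_if_regular_spanning:
  assumes H: "hypergraph V E inc" and L: "case_a V E inc L \<or> case_bc E inc L"
    and sp: "spanning_edges E L S"
    and reg: "locally_1_2_regular E S"
    and short: "(\<forall>x\<in>E. sdeg S x = 2) \<or> case_bc E inc L"
  shows "quasi_eulerian V E inc"
proof -
  have "finite E" using H by (simp add: hypergraph_def)
  then obtain C where C: "finite C" "\<forall>c\<in>C. graph_cycle L c \<and> (sdeg S (hd c) = 2 \<longrightarrow> 3 \<le> length c)"
    "(\<Union>c\<in>C. set c) = E" "pairwise (\<lambda>c c'. set c \<inter> set c' = {}) C"
    using graph_cycle_partition_of_spanning[OF _ case_graph_sym_irrefl[OF L] sp reg] by blast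
  have "hd c \<in> E" if "c \<in> C" for c
  proof -
    have "c \<noteq> []" using C(2) that unfolding graph_cycle_def by auto
    then show ?thesis using C(3) that by (auto intro: hd_in_set)
  qed
  then have "\<forall>c\<in>C. graph_cycle L c \<and> (3 \<le> length c \<or> case_bc E inc L)"
    using C(2) short by blast
  then show ?thesis using quasi_eulerian_if_cycle_partition[OF H L C(1) _ C(3,4)] by blast
qed

theorem theorem2p14:
  fixes V :: "'v set" and E :: "'e set" and inc :: "'e \<Rightarrow> 'v set"
    and L :: "'e \<Rightarrow> 'e \<Rightarrow> bool"
  assumes H: "hypergraph V E inc"
    and cases: "((\<forall>v\<in>V. hdeg E inc v \<le> 2) \<and> L = intersection_graph inc)
             \<or> (L = intersection_graph_star 2 inc \<and> bipartite E L)
             \<or> L = intersection_graph_star 3 inc"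
  shows "(has_hamilton_cycle E L \<longrightarrow> eulerian V E inc)
       \<and> (has_2_factor E L \<longrightarrow> quasi_eulerian V E inc)
       \<and> (((L = intersection_graph_star 2 inc \<and> bipartite E L) \<or> L = intersection_graph_star 3 inc)
            \<longrightarrow> has_1_2_regular_spanning E L \<longrightarrow> quasi_eulerian V E inc)"
proof -
  have L: "case_a V E inc L \<or> case_bc E inc L"
    using cases unfolding case_a_def case_bc_def by blast
  have "eulerian V E inc" if ham: "has_hamilton_cycle E L"
  proof -
    obtain cs where "hamilton_cycle E L cs" using ham unfolding has_hamilton_cycle_def by blast
    note cs = graph_cycle_if_hamilton_cycle[OF this]
    then obtain vs where "closed_strict_trail V E inc vs cs"
      using closed_strict_trail_of_graph_cycle[OF H L] by blast
    with cs(3) show ?thesis unfolding eulerian_def by blast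
  qed
  moreover have "quasi_eulerian V E inc" if two_factor: "has_2_factor E L"
  proof -
    obtain S where "spanning_edges E L S" "\<forall>x\<in>E. sdeg S x = 2"
      using two_factor unfolding has_2_factor_def by blast
    then show ?thesis
      using quasi_eulerian_if_regular_spanning[OF H L] locally_1_2_regular_if_2_factor by blast
  qed
  moreover have "quasi_eulerian V E inc" if bc: "case_bc E inc L" and spanning: "has_1_2_regular_spanning E L"
  proof -
    obtain S where "spanning_edges E L S" "locally_1_2_regular E S"
      using spanning locally_1_2_regular_if_regular_components
      unfolding has_1_2_regular_spanning_def by blast
    then show ?thesis using quasi_eulerian_if_regular_spanning[OF H L] bc by blast
  qed
  ultimately show ?thesis unfolding case_bc_def by blast
qed

end
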